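(* In the setting below, assume $c^2=\gamma p/\rho>0$ and $0<|H|^2\ne\rho c^2$, and restrict to points with $\xi\cdot H\ne0$ and $\xi\times H\ne0$. Let $\Gamma_1,\Gamma_2,\Gamma_3$ be pairwise disjoint conic neighborhoods of $\{q_1=0\},\{q_2=0\},\{q_3=0\}$, and set $q=q_j$ in $\Gamma_j$. Then $P$ is of real principal type with respect to the Hamilton field $H_q$ of $\operatorname{Char}P=\{q=0\}$; that is, at every point of $\operatorname{Char}P$ there is a $3\times 3$ symbol $\tilde p_2$ with $\tilde p_2p_2=q\operatorname{Id}_3$ nearby, with $q$ a scalar symbol of real principal type.
   Context: $\rho,p:\mathbb R^3\to\mathbb R$, $H:\mathbb R^3\to\mathbb R^3$ smooth, $\rho>0$, $\gamma$ constant; $P$ is the $3\times3$ operator on $\mathbb R_t\times\mathbb R^3_x$: $P\beta=-\rho\partial_t^2\beta+\gamma\nabla(p\operatorname{div}\beta)+\nabla(\beta\cdot\nabla p)+(\nabla\times(\nabla\times(\beta\times H)))\times H+(\nabla\times H)\times(\nabla\times(\beta\times H))$, with principal symbol $p_2=(\rho\tau^2-(H\cdot\xi)^2)\operatorname{Id}_3-(\gamma p+|H|^2)\xi\otimes\xi+(H\cdot\xi)(\xi\otimes H+H\otimes\xi)$. $q_1=\rho\tau^2-(H\cdot\xi)^2$, $q_2=\rho(\tau^2-c_s^2(x,\xi))$, $q_3=\rho(\tau^2-c_f^2(x,\xi))$, where $c^2=\gamma p/\rho$, $h^2=|H|^2/\rho$, $b^2=|\xi\times H|^2/\rho$, $c_{f,s}^2(x,\xi)=\tfrac12\big((c^2+h^2)|\xi|^2\pm\sqrt{(c^2-h^2)^2|\xi|^4+4b^2c^2|\xi|^2}\big)$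 ($+$ for $f$, $-$ for $s$). A scalar symbol $q$ is of real principal type if it is real and its Hamilton field $H_q=\sum\partial_{\xi_j}q\,\partial_{x_j}-\partial_{x_j}q\,\partial_{\xi_j}$ is non-vanishing and not in the radial direction where $q=0$. *)

theory Defs
  imports "HOL-Analysis.Analysis"
begin

text \<open>Phase space T*(R_t x R^3_x): a point is (t, x, tau, xi).\<close>
type_synonym phase = "real \<times> (real^3) \<times> real \<times> (real^3)"

fun iter_dd :: "'a list \<Rightarrow> ('a::real_normed_vector \<Rightarrow> 'b::real_normed_vector) \<Rightarrow> 'a \<Rightarrow> 'b" where
  "iter_dd [] f = f"
| "iter_dd (v # vs) f = (\<lambda>x. frechet_derivative (iter_dd vs f) (at x) v)"

definition smooth_on :: "'a::real_normed_vector set \<Rightarrow> ('a \<Rightarrow> 'b::real_normed_vector) \<Rightarrow> bool" where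
  "smooth_on S f \<longleftrightarrow> open S \<and> (\<forall>vs. iter_dd vs f differentiable_on S)"

definition dil :: "real \<Rightarrow> phase \<Rightarrow> phase" where
  "dil s z = (case z of (t, x, \<tau>, \<xi>) \<Rightarrow> (t, x, s * \<tau>, s *\<^sub>R \<xi>))"

definition conic :: "phase set \<Rightarrow> bool" where
  "conic S \<longleftrightarrow> (\<forall>z\<in>S. \<forall>s>0. dil s z \<in> S)"

definition homogeneous_on :: "phase set \<Rightarrow> nat \<Rightarrow> (phase \<Rightarrow> 'b::real_normed_vector) \<Rightarrow> bool" where
  "homogeneous_on S k f \<longleftrightarrow> (\<forall>z\<in>S. \<forall>s>0. f (dil s z) = s ^ k *\<^sub>R f z)"

text \<open>Hamilton field on T*(R^4):
  H_q = dq/dtau d_t + dq/dxi . d_x - dq/dt d_tau - dq/dx . d_xi,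
  written as a vector (t-, x-, tau-, xi-components); radial field (0,0,tau,xi).\<close>
definition ham :: "(phase \<Rightarrow> real) \<Rightarrow> phase \<Rightarrow> phase" where
  "ham q z = (let D = frechet_derivative q (at z) in
     (D (0, 0, 1, 0),
      (\<chi> j. D (0, 0, 0, axis j 1)),
      - D (1, 0, 0, 0),
      - (\<chi> j. D (0, axis j 1, 0, 0))))"

definition radial :: "phase \<Rightarrow> phase" where
  "radial z = (case z of (t, x, \<tau>, \<xi>) \<Rightarrow> (0, 0, \<tau>, \<xi>))"

definition real_principal_type :: "phase set \<Rightarrow> (phase \<Rightarrow> real) \<Rightarrow> bool" where
  "real_principal_type S q \<longleftrightarrow> smooth_on S q \<and>
     (\<forall>z\<in>S. q z = 0 \<longrightarrow> ham q z \<noteq> 0 \<and> (\<forall>c::real. ham q z \<noteq> c *\<^sub>R radial z))"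

definition outer :: "real^3 \<Rightarrow> real^3 \<Rightarrow> real^3^3" where
  "outer u v = (\<chi> i j. u $ i * v $ j)"

definition p2 :: "(real^3 \<Rightarrow> real) \<Rightarrow> (real^3 \<Rightarrow> real) \<Rightarrow> (real^3 \<Rightarrow> real^3) \<Rightarrow> real \<Rightarrow> phase \<Rightarrow> real^3^3" where
  "p2 rho p H gamma z = (case z of (t, x, \<tau>, \<xi>) \<Rightarrow>
      (rho x * \<tau>^2 - (H x \<bullet> \<xi>)^2) *\<^sub>R mat 1
      - (gamma * p x + (norm (H x))^2) *\<^sub>R outer \<xi> \<xi>
      + (H x \<bullet> \<xi>) *\<^sub>R (outer \<xi> (H x) + outer (H x) \<xi>))"

definition csq :: "(real^3 \<Rightarrow> real) \<Rightarrow> (real^3 \<Rightarrow> real) \<Rightarrow> real \<Rightarrow> real^3 \<Rightarrow> real" where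
  "csq rho p gamma x = gamma * p x / rho x"

definition hsq :: "(real^3 \<Rightarrow> real) \<Rightarrow> (real^3 \<Rightarrow> real^3) \<Rightarrow> real^3 \<Rightarrow> real" where
  "hsq rho H x = (norm (H x))^2 / rho x"

definition bsq :: "(real^3 \<Rightarrow> real) \<Rightarrow> (real^3 \<Rightarrow> real^3) \<Rightarrow> real^3 \<Rightarrow> real^3 \<Rightarrow> real" where
  "bsq rho H x \<xi> = (norm (cross3 \<xi> (H x)))^2 / rho x"

definition cfsq :: "(real^3 \<Rightarrow> real) \<Rightarrow> (real^3 \<Rightarrow> real) \<Rightarrow> (real^3 \<Rightarrow> real^3) \<Rightarrow> real \<Rightarrow> real^3 \<Rightarrow> real^3 \<Rightarrow> real" where
  "cfsq rho p H gamma x \<xi> = ((csq rho p gamma x + hsq rho H x) * (norm \<xi>)^2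
     + sqrt ((csq rho p gamma x - hsq rho H x)^2 * (norm \<xi>)^4
             + 4 * bsq rho H x \<xi> * csq rho p gamma x * (norm \<xi>)^2)) / 2"

definition cssq :: "(real^3 \<Rightarrow> real) \<Rightarrow> (real^3 \<Rightarrow> real) \<Rightarrow> (real^3 \<Rightarrow> real^3) \<Rightarrow> real \<Rightarrow> real^3 \<Rightarrow> real^3 \<Rightarrow> real" where
  "cssq rho p H gamma x \<xi> = ((csq rho p gamma x + hsq rho H x) * (norm \<xi>)^2
     - sqrt ((csq rho p gamma x - hsq rho H x)^2 * (norm \<xi>)^4
             + 4 * bsq rho H x \<xi> * csq rho p gamma x * (norm \<xi>)^2)) / 2"

definition q1 :: "(real^3 \<Rightarrow> real) \<Rightarrow> (real^3 \<Rightarrow> real^3) \<Rightarrow> phase \<Rightarrow> real" where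
  "q1 rho H z = (case z of (t, x, \<tau>, \<xi>) \<Rightarrow> rho x * \<tau>^2 - (H x \<bullet> \<xi>)^2)"

definition q2 :: "(real^3 \<Rightarrow> real) \<Rightarrow> (real^3 \<Rightarrow> real) \<Rightarrow> (real^3 \<Rightarrow> real^3) \<Rightarrow> real \<Rightarrow> phase \<Rightarrow> real" where
  "q2 rho p H gamma z = (case z of (t, x, \<tau>, \<xi>) \<Rightarrow> rho x * (\<tau>^2 - cssq rho p H gamma x \<xi>))"

definition q3 :: "(real^3 \<Rightarrow> real) \<Rightarrow> (real^3 \<Rightarrow> real) \<Rightarrow> (real^3 \<Rightarrow> real^3) \<Rightarrow> real \<Rightarrow> phase \<Rightarrow> real" where
  "q3 rho p H gamma z = (case z of (t, x, \<tau>, \<xi>) \<Rightarrow> rho x * (\<tau>^2 - cfsq rho p H gamma x \<xi>))"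

definition Omega :: "(real^3 \<Rightarrow> real^3) \<Rightarrow> phase set" where
  "Omega H = {z. case z of (t, x, \<tau>, \<xi>) \<Rightarrow> \<xi> \<bullet> H x \<noteq> 0 \<and> cross3 \<xi> (H x) \<noteq> 0}"

definition reduces_at :: "(phase \<Rightarrow> real^3^3) \<Rightarrow> phase set \<Rightarrow> (phase \<Rightarrow> real) \<Rightarrow> phase \<Rightarrow> bool" where
  "reduces_at P G q z \<longleftrightarrow> (\<exists>U pt. open U \<and> conic U \<and> z \<in> U \<and> U \<subseteq> G \<and>
      smooth_on U pt \<and> homogeneous_on U 0 pt \<and>
      (\<forall>w\<in>U. pt w ** P w = q w *\<^sub>R mat 1) \<and> real_principal_type U q)"

end

theory Submission
  imports Defs
begin

text \<open>Expanding the determinant gives det p2 = q1 R, where R is a quartic in \<tau> whose roots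
  in \<tau>^2 are c_s^2 and c_f^2 (Vieta), so det p2 = q1 q2 q3. On \<Gamma>_j the two other factors
  do not vanish, and the adjugate of p2 divided by their product is a smooth left inverse of
  p2 up to q_j, homogeneous of degree 0. Each q_j has the form \<rho> \<tau>^2 - g(x, \<xi>) with g > 0
  where \<xi> \<bullet> H \<noteq> 0 (for q2 because c_s^2 c_f^2 = \<gamma> p |\<xi>|^2 (H \<bullet> \<xi>)^2 / \<rho>^2), so \<tau> \<noteq> 0
  on the zero set of q_j and the t-component 2 \<rho> \<tau> of its Hamilton field does not vanish
  there, whereas the radial field has no t-component.\<close>

section \<open>Smooth functions\<close>

lemma iter_dd_append: "iter_dd (vs @ ws) f = iter_dd vs (iter_dd ws f)"
  by (induction vs) auto

lemma smooth_on_imp_differentiable_on: "smooth_on S f \<Longrightarrow> f differentiable_on S"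
  unfolding smooth_on_def by (metis iter_dd.simps(1))

lemma smooth_on_imp_differentiable_at: "smooth_on S f \<Longrightarrow> x \<in> S \<Longrightarrow> f differentiable at x"
  using smooth_on_imp_differentiable_on differentiable_on_eq_differentiable_at smooth_on_def
  by blast

lemma smooth_on_frechet_derivative:
  assumes "smooth_on S f" shows "smooth_on S (\<lambda>x. frechet_derivative f (at x) v)"
proof -
  have "iter_dd vs (\<lambda>x. frechet_derivative f (at x) v) = iter_dd (vs @ [v]) f" for vs
    by (simp add: iter_dd_append)
  then show ?thesis using assms unfolding smooth_on_def by simp
qed

lemma smooth_on_coinduct:
  assumes S: "open S"
    and deriv: "\<And>g. g \<in> F \<Longrightarrow>
      \<exists>D. (\<forall>x\<in>S. (g has_derivative D x) (at x)) \<and> (\<forall>v. (\<lambda>x. D x v) \<in> F)"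
    and "f \<in> F"
  shows "smooth_on S f"
proof -
  have agree: "\<exists>D. (\<forall>x\<in>S. (h has_derivative D x) (at x)) \<and> (\<forall>v. (\<lambda>x. D x v) \<in> F)"
    if g: "g \<in> F" and hg: "\<forall>x\<in>S. h x = g x" for g h
  proof -
    obtain D where D: "\<forall>x\<in>S. (g has_derivative D x) (at x)" "\<forall>v. (\<lambda>x. D x v) \<in> F"
      using deriv[OF g] by blast
    have "(h has_derivative D x) (at x)" if "x \<in> S" for x
      using has_derivative_transform_within_open[OF D(1)[rule_format, OF that] S that]
        hg by simp
    then show ?thesis using D(2) by blast
  qed
  have iterate: "\<exists>g\<in>F. \<forall>x\<in>S. iter_dd vs f x = g x" for vs
  proof (induction vs)
    case Nil
    then show ?case using \<open>f \<in> F\<close> by auto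
  next
    case (Cons v vs)
    then obtain D where D: "\<forall>x\<in>S. (iter_dd vs f has_derivative D x) (at x)" "\<forall>v. (\<lambda>x. D x v) \<in> F"
      using agree by blast
    then have "\<forall>x\<in>S. iter_dd (v # vs) f x = D x v"
      using frechet_derivative_at by fastforce
    then show ?case
      using D(2) by (intro bexI[of _ "\<lambda>x. D x v"]) simp_all
  qed
  have "iter_dd vs f differentiable_on S" for vs
  proof -
    obtain D where "\<forall>x\<in>S. (iter_dd vs f has_derivative D x) (at x)"
      using iterate[of vs] agree by blast
    then show ?thesis
      using S by (auto simp: differentiable_on_eq_differentiable_at differentiable_def)
  qed
  then show ?thesis using S unfolding smooth_on_def by blast
qed

lemma has_derivative_frechet_derivative_smooth_on:
  "smooth_on S f \<Longrightarrow> x \<in> S \<Longrightarrow> (f has_derivative frechet_derivative f (at x)) (at x)"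
  using smooth_on_imp_differentiable_at frechet_derivative_works by blast

lemma smooth_on_inner_const:
  assumes "smooth_on S f" shows "smooth_on S (\<lambda>x. f x \<bullet> c)"
proof (rule smooth_on_coinduct)
  show "open S" using assms smooth_on_def by blast
  let ?F = "{(\<lambda>x. g x \<bullet> c) | g. smooth_on S g}"
  show "(\<lambda>x. f x \<bullet> c) \<in> ?F" using assms by blast
  fix h assume "h \<in> ?F"
  then obtain g where g: "smooth_on S g" and h: "h = (\<lambda>x. g x \<bullet> c)" by blast
  show "\<exists>D. (\<forall>x\<in>S. (h has_derivative D x) (at x)) \<and> (\<forall>v. (\<lambda>x. D x v) \<in> ?F)"
  proof (intro exI conjI ballI allI)
    fix x assume "x \<in> S"
    show "(h has_derivative (\<lambda>v. frechet_derivative g (at x) v \<bullet> c)) (at x)"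
      unfolding h using has_derivative_frechet_derivative_smooth_on[OF g \<open>x \<in> S\<close>]
      by (rule bounded_linear.has_derivative[OF bounded_linear_inner_left])
  next
    fix v
    show "(\<lambda>x. frechet_derivative g (at x) v \<bullet> c) \<in> ?F"
      using smooth_on_frechet_derivative[OF g]
      by (intro CollectI exI[of _ "\<lambda>x. frechet_derivative g (at x) v"]) simp
  qed
qed

lemma smooth_on_vec_nth:
  fixes f :: "'a::real_normed_vector \<Rightarrow> real^'n"
  assumes "smooth_on S f" shows "smooth_on S (\<lambda>x. f x $ i)"
  unfolding cart_eq_inner_axis by (rule smooth_on_inner_const[OF assms])

lemma smooth_on_sum_scaleR:
  fixes c :: "'k \<Rightarrow> 'b::real_normed_vector"
  assumes S: "open S" and "finite K" and "\<And>k. k \<in> K \<Longrightarrow> smooth_on S (f k)"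
  shows "smooth_on S (\<lambda>x. \<Sum>k\<in>K. f k x *\<^sub>R c k)"
proof (rule smooth_on_coinduct[OF S])
  let ?F = "{(\<lambda>x. \<Sum>k\<in>K. g k x *\<^sub>R c k) | g. \<forall>k\<in>K. smooth_on S (g k)}"
  show "(\<lambda>x. \<Sum>k\<in>K. f k x *\<^sub>R c k) \<in> ?F" using assms(3) by blast
  fix h assume "h \<in> ?F"
  then obtain g where g: "\<forall>k\<in>K. smooth_on S (g k)" and h: "h = (\<lambda>x. \<Sum>k\<in>K. g k x *\<^sub>R c k)"
    by blast
  show "\<exists>D. (\<forall>x\<in>S. (h has_derivative D x) (at x)) \<and> (\<forall>v. (\<lambda>x. D x v) \<in> ?F)"
  proof (intro exI conjI ballI allI)
    fix x assume "x \<in> S"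
    show "(h has_derivative (\<lambda>v. \<Sum>k\<in>K. frechet_derivative (g k) (at x) v *\<^sub>R c k)) (at x)"
      unfolding h
    proof (rule has_derivative_sum)
      fix k assume "k \<in> K"
      with g \<open>x \<in> S\<close> show "((\<lambda>x. g k x *\<^sub>R c k) has_derivative
          (\<lambda>v. frechet_derivative (g k) (at x) v *\<^sub>R c k)) (at x)"
        by (intro has_derivative_scaleR_left has_derivative_frechet_derivative_smooth_on) auto
    qed
  next
    fix v
    show "(\<lambda>x. \<Sum>k\<in>K. frechet_derivative (g k) (at x) v *\<^sub>R c k) \<in> ?F"
      using g by (intro CollectI exI[of _ "\<lambda>k x. frechet_derivative (g k) (at x) v"])
        (simp add: smooth_on_frechet_derivative)
  qed
qed

lemma smooth_on_euclidean_components: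
  fixes f :: "'a::real_normed_vector \<Rightarrow> 'b::euclidean_space"
  assumes "open S" and "\<And>b. b \<in> Basis \<Longrightarrow> smooth_on S (\<lambda>x. f x \<bullet> b)"
  shows "smooth_on S f"
proof -
  have "smooth_on S (\<lambda>x. \<Sum>b\<in>Basis. (f x \<bullet> b) *\<^sub>R b)"
    by (rule smooth_on_sum_scaleR[OF assms(1) finite_Basis]) (rule assms(2))
  then show ?thesis by (simp only: euclidean_representation_sum_fun)
qed

lemma smooth_on_matrix_entries:
  fixes A :: "'a::real_normed_vector \<Rightarrow> real^'n^'m"
  assumes "open S" and "\<And>i j. smooth_on S (\<lambda>x. A x $ i $ j)"
  shows "smooth_on S A"
proof (rule smooth_on_euclidean_components[OF assms(1)])
  fix b :: "real^'n^'m" assume "b \<in> Basis"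
  then obtain i u where "u \<in> Basis" "b = axis i u"
    unfolding Basis_vec_def by blast
  moreover obtain j where "u = axis j 1" using axis_inverse[OF \<open>u \<in> Basis\<close>] by blast
  ultimately have "(\<lambda>x. A x \<bullet> b) = (\<lambda>x. A x $ i $ j)"
    by (simp add: inner_axis)
  then show "smooth_on S (\<lambda>x. A x \<bullet> b)" using assms(2) by simp
qed

section \<open>An algebra of smooth symbols\<close>

definition phase_x :: "phase \<Rightarrow> real^3" where "phase_x z = fst (snd z)"
definition phase_tau :: "phase \<Rightarrow> real" where "phase_tau z = fst (snd (snd z))"
definition phase_xi :: "phase \<Rightarrow> real^3" where "phase_xi z = snd (snd (snd z))"

lemma phase_coordinates [simp]:
  "phase_x (t, x, \<tau>, \<xi>) = x" "phase_tau (t, x, \<tau>, \<xi>) = \<tau>" "phase_xi (t, x, \<tau>, \<xi>) = \<xi>"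
  by (simp_all add: phase_x_def phase_tau_def phase_xi_def)

text \<open>A device for proving smoothness: the algebra is closed under directional
  differentiation, so no closure lemmas for smooth_on are needed.\<close>
inductive_set elementary_on :: "phase set \<Rightarrow> (phase \<Rightarrow> real) set" for S where
  const: "(\<lambda>z. c) \<in> elementary_on S"
| tau: "phase_tau \<in> elementary_on S"
| xi: "(\<lambda>z. phase_xi z $ i) \<in> elementary_on S"
| base: "smooth_on UNIV g \<Longrightarrow> (\<lambda>z. g (phase_x z)) \<in> elementary_on S"
| add: "f \<in> elementary_on S \<Longrightarrow> g \<in> elementary_on S \<Longrightarrow> (\<lambda>z. f z + g z) \<in> elementary_on S"
| mult: "f \<in> elementary_on S \<Longrightarrow> g \<in> elementary_on S \<Longrightarrow> (\<lambda>z. f z * g z) \<in> elementary_on S"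
| inverse: "f \<in> elementary_on S \<Longrightarrow> (\<forall>z\<in>S. f z \<noteq> 0) \<Longrightarrow> (\<lambda>z. inverse (f z)) \<in> elementary_on S"
| sqrt: "f \<in> elementary_on S \<Longrightarrow> (\<forall>z\<in>S. f z > 0) \<Longrightarrow> (\<lambda>z. sqrt (f z)) \<in> elementary_on S"

lemma has_derivative_phase_projections:
  "(phase_x has_derivative phase_x) (at z)"
  "(phase_tau has_derivative phase_tau) (at z)"
  "(phase_xi has_derivative phase_xi) (at z)"
  unfolding phase_x_def phase_tau_def phase_xi_def by (auto intro!: derivative_eq_intros)

lemma elementary_on_has_derivative:
  assumes "f \<in> elementary_on S"
  shows "\<exists>D. (\<forall>z\<in>S. (f has_derivative D z) (at z)) \<and> (\<forall>v. (\<lambda>z. D z v) \<in> elementary_on S)"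
  using assms
proof (induction rule: elementary_on.induct)
  case (const c)
  show ?case by (rule exI[of _ "\<lambda>z v. 0"]) (simp add: elementary_on.const)
next
  case tau
  show ?case
    by (intro exI[of _ "\<lambda>z. phase_tau"]) (simp add: has_derivative_phase_projections elementary_on.const)
next
  case (xi i)
  have "((\<lambda>z. phase_xi z $ i) has_derivative (\<lambda>v. phase_xi v $ i)) (at z)" for z
    using bounded_linear.has_derivative[OF bounded_linear_vec_nth has_derivative_phase_projections(3)] .
  then show ?case by (intro exI[of _ "\<lambda>z v. phase_xi v $ i"]) (simp add: elementary_on.const)
next
  case (base g)
  let ?D = "\<lambda>z v. frechet_derivative g (at (phase_x z)) (phase_x v)"
  have "((\<lambda>z. g (phase_x z)) has_derivative ?D z) (at z)" for z
    using diff_chain_at[OF has_derivative_phase_projections(1)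
        has_derivative_frechet_derivative_smooth_on[OF base UNIV_I]]
    by (simp add: o_def)
  moreover have "(\<lambda>z. ?D z v) \<in> elementary_on S" for v
    using elementary_on.base[OF smooth_on_frechet_derivative[OF base]] .
  ultimately show ?case by (intro exI[of _ ?D]) simp
next
  case (add f g)
  then obtain F G where F: "\<forall>z\<in>S. (f has_derivative F z) (at z)" "\<forall>v. (\<lambda>z. F z v) \<in> elementary_on S"
    and G: "\<forall>z\<in>S. (g has_derivative G z) (at z)" "\<forall>v. (\<lambda>z. G z v) \<in> elementary_on S" by blast
  show ?case
    using F G by (intro exI[of _ "\<lambda>z v. F z v + G z v"])
      (auto intro: has_derivative_add elementary_on.add)
next
  case (mult f g)
  then obtain F G where F: "\<forall>z\<in>S. (f has_derivative F z) (at z)" "\<forall>v. (\<lambda>z. F z v) \<in> elementary_on S"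
    and G: "\<forall>z\<in>S. (g has_derivative G z) (at z)" "\<forall>v. (\<lambda>z. G z v) \<in> elementary_on S" by blast
  show ?case
  proof (intro exI[of _ "\<lambda>z v. f z * G z v + F z v * g z"] conjI ballI allI)
    fix z assume "z \<in> S"
    with F G show "((\<lambda>z. f z * g z) has_derivative (\<lambda>v. f z * G z v + F z v * g z)) (at z)"
      by (intro has_derivative_mult) auto
  next
    fix v
    show "(\<lambda>z. f z * G z v + F z v * g z) \<in> elementary_on S"
      by (intro elementary_on.add elementary_on.mult mult.hyps F(2)[rule_format] G(2)[rule_format])
  qed
next
  case (inverse f)
  then obtain F where F: "\<forall>z\<in>S. (f has_derivative F z) (at z)" "\<forall>v. (\<lambda>z. F z v) \<in> elementary_on S"
    by blast
  have inv: "(\<lambda>z. inverse (f z)) \<in> elementary_on S"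
    using inverse.hyps by (rule elementary_on.inverse)
  have "((\<lambda>z. inverse (f z)) has_derivative (\<lambda>v. - (inverse (f z) * F z v * inverse (f z)))) (at z)"
    if "z \<in> S" for z
    using Deriv.has_derivative_inverse[OF _ F(1)[rule_format, OF that]] inverse.hyps(2) that by blast
  moreover have "(\<lambda>z. - (inverse (f z) * F z v * inverse (f z))) \<in> elementary_on S" for v
    using elementary_on.mult[OF elementary_on.const[of "-1"]
        elementary_on.mult[OF elementary_on.mult[OF inv F(2)[rule_format]] inv]] by simp
  ultimately show ?case
    by (intro exI[of _ "\<lambda>z v. - (inverse (f z) * F z v * inverse (f z))"]) simp
next
  case (sqrt f)
  then obtain F where F: "\<forall>z\<in>S. (f has_derivative F z) (at z)" "\<forall>v. (\<lambda>z. F z v) \<in> elementary_on S"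
    by blast
  have inv: "(\<lambda>z. inverse (sqrt (f z))) \<in> elementary_on S"
    using sqrt.hyps by (intro elementary_on.inverse elementary_on.sqrt) auto
  have "((\<lambda>z. sqrt (f z)) has_derivative (\<lambda>v. F z v * (inverse (sqrt (f z)) / 2))) (at z)"
    if "z \<in> S" for z
    using has_derivative_real_sqrt[OF _ F(1)[rule_format, OF that]] sqrt.hyps(2) that by blast
  moreover have "(\<lambda>z. F z v * (inverse (sqrt (f z)) / 2)) \<in> elementary_on S" for v
    using elementary_on.mult[OF F(2)[rule_format] elementary_on.mult[OF inv elementary_on.const[of "1/2"]]]
    by simp
  ultimately show ?case
    by (intro exI[of _ "\<lambda>z v. F z v * (inverse (sqrt (f z)) / 2)"]) simp
qed

lemma elementary_on_imp_smooth_on: "open S \<Longrightarrow> f \<in> elementary_on S \<Longrightarrow> smooth_on S f"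
  by (rule smooth_on_coinduct[OF _ elementary_on_has_derivative])

lemma elementary_on_diff:
  "f \<in> elementary_on S \<Longrightarrow> g \<in> elementary_on S \<Longrightarrow> (\<lambda>z. f z - g z) \<in> elementary_on S"
  using elementary_on.add[OF _ elementary_on.mult[OF elementary_on.const[of "-1"]], of f S g]
  by simp

lemma elementary_on_power: "f \<in> elementary_on S \<Longrightarrow> (\<lambda>z. f z ^ n) \<in> elementary_on S"
  by (induction n) (simp_all add: elementary_on.const elementary_on.mult)

lemma elementary_on_sum:
  "finite I \<Longrightarrow> (\<And>i. i \<in> I \<Longrightarrow> f i \<in> elementary_on S) \<Longrightarrow> (\<lambda>z. \<Sum>i\<in>I. f i z) \<in> elementary_on S"
  by (induction I rule: finite_induct) (simp_all add: elementary_on.const elementary_on.add)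

lemma elementary_on_inner:
  fixes a b :: "phase \<Rightarrow> real^'n"
  assumes "\<And>i. (\<lambda>z. a z $ i) \<in> elementary_on S" "\<And>i. (\<lambda>z. b z $ i) \<in> elementary_on S"
  shows "(\<lambda>z. a z \<bullet> b z) \<in> elementary_on S"
  unfolding inner_vec_def inner_real_def
  by (intro elementary_on_sum elementary_on.mult assms) simp

lemma elementary_on_base_nth:
  "smooth_on UNIV g \<Longrightarrow> (\<lambda>z. g (phase_x z) $ i) \<in> elementary_on S"
  using elementary_on.base[OF smooth_on_vec_nth] .

section \<open>Factorisation of the determinant\<close>

definition adjugate3 :: "real^3^3 \<Rightarrow> real^3^3" where
  "adjugate3 A = vector [
     vector [A$2$2*A$3$3 - A$2$3*A$3$2, A$1$3*A$3$2 - A$1$2*A$3$3, A$1$2*A$2$3 - A$1$3*A$2$2],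
     vector [A$2$3*A$3$1 - A$2$1*A$3$3, A$1$1*A$3$3 - A$1$3*A$3$1, A$1$3*A$2$1 - A$1$1*A$2$3],
     vector [A$2$1*A$3$2 - A$2$2*A$3$1, A$1$2*A$3$1 - A$1$1*A$3$2, A$1$1*A$2$2 - A$1$2*A$2$1]]"

lemma adjugate3_mult: "adjugate3 A ** A = det A *\<^sub>R mat 1"
  by (simp add: vec_eq_iff forall_3 matrix_matrix_mult_def sum_3 det_3 adjugate3_def mat_def
      algebra_simps)

lemma adjugate3_scaleR: "adjugate3 (c *\<^sub>R A) = c\<^sup>2 *\<^sub>R adjugate3 A"
  by (simp add: vec_eq_iff forall_3 adjugate3_def algebra_simps power2_eq_square)

lemma elementary_on_adjugate3:
  assumes "\<And>i j. (\<lambda>z. A z $ i $ j) \<in> elementary_on S"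
  shows "(\<lambda>z. adjugate3 (A z) $ i $ j) \<in> elementary_on S"
proof -
  have "(\<lambda>z. adjugate3 (A z) $ a $ b) \<in> elementary_on S" if "a \<in> {1,2,3}" "b \<in> {1,2,3}" for a b :: 3
    using that by (auto simp: adjugate3_def intro!: elementary_on_diff elementary_on.mult assms)
  moreover have "i \<in> {1,2,3}" "j \<in> {1,2,3}" using exhaust_3 by auto
  ultimately show ?thesis by blast
qed

lemma p2_nth: "p2 rho p H gamma (t, x, \<tau>, \<xi>) $ i $ j =
   (rho x * \<tau>\<^sup>2 - (H x \<bullet> \<xi>)\<^sup>2) * (if i = j then 1 else 0)
   - (gamma * p x + (norm (H x))\<^sup>2) * (\<xi> $ i * \<xi> $ j)
   + (H x \<bullet> \<xi>) * (\<xi> $ i * H x $ j + H x $ i * \<xi> $ j)"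
  by (simp add: p2_def outer_def mat_def)

definition magnetosonic_quartic ::
  "(real^3 \<Rightarrow> real) \<Rightarrow> (real^3 \<Rightarrow> real) \<Rightarrow> (real^3 \<Rightarrow> real^3) \<Rightarrow> real \<Rightarrow> phase \<Rightarrow> real" where
  "magnetosonic_quartic rho p H gamma z = (case z of (t, x, \<tau>, \<xi>) \<Rightarrow>
     (rho x)\<^sup>2 * \<tau>^4 - rho x * (gamma * p x + (norm (H x))\<^sup>2) * (norm \<xi>)\<^sup>2 * \<tau>\<^sup>2
     + gamma * p x * (norm \<xi>)\<^sup>2 * (H x \<bullet> \<xi>)\<^sup>2)"

lemma det_p2: "det (p2 rho p H gamma z) = q1 rho H z * magnetosonic_quartic rho p H gamma z"
proof -
  obtain t x \<tau> \<xi> where z: "z = (t, x, \<tau>, \<xi>)" by (cases z) auto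
  show ?thesis
    unfolding z det_3 p2_nth q1_def magnetosonic_quartic_def power2_norm_eq_inner inner_vec_def
      sum_3 inner_real_def
    by simp algebra
qed

definition magnetosonic_disc ::
  "(real^3 \<Rightarrow> real) \<Rightarrow> (real^3 \<Rightarrow> real) \<Rightarrow> (real^3 \<Rightarrow> real^3) \<Rightarrow> real \<Rightarrow> real^3 \<Rightarrow> real^3 \<Rightarrow> real" where
  "magnetosonic_disc rho p H gamma x \<xi> = (csq rho p gamma x - hsq rho H x)\<^sup>2 * (norm \<xi>)^4
     + 4 * bsq rho H x \<xi> * csq rho p gamma x * (norm \<xi>)\<^sup>2"

lemma cssq_eq: "cssq rho p H gamma x \<xi> =
    ((csq rho p gamma x + hsq rho H x) * (norm \<xi>)\<^sup>2 - sqrt (magnetosonic_disc rho p H gamma x \<xi>)) / 2"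
  unfolding cssq_def magnetosonic_disc_def ..

lemma cfsq_eq: "cfsq rho p H gamma x \<xi> =
    ((csq rho p gamma x + hsq rho H x) * (norm \<xi>)\<^sup>2 + sqrt (magnetosonic_disc rho p H gamma x \<xi>)) / 2"
  unfolding cfsq_def magnetosonic_disc_def ..

lemma bsq_eq: "bsq rho H x \<xi> = ((norm \<xi>)\<^sup>2 * (norm (H x))\<^sup>2 - (H x \<bullet> \<xi>)\<^sup>2) / rho x"
proof -
  have "(norm (cross3 \<xi> (H x)))\<^sup>2 = (norm \<xi> * norm (H x))\<^sup>2 - (\<xi> \<bullet> H x)\<^sup>2"
    using norm_cross_dot[of \<xi> "H x"] by linarith
  then show ?thesis unfolding bsq_def by (simp add: power_mult_distrib inner_commute)
qed

lemma magnetosonic_disc_nonneg: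
  assumes "rho x > 0" "csq rho p gamma x \<ge> 0"
  shows "magnetosonic_disc rho p H gamma x \<xi> \<ge> 0"
  using assms unfolding magnetosonic_disc_def bsq_def by simp

lemma cssq_add_cfsq:
  "cssq rho p H gamma x \<xi> + cfsq rho p H gamma x \<xi> = (csq rho p gamma x + hsq rho H x) * (norm \<xi>)\<^sup>2"
  unfolding cssq_eq cfsq_eq by (simp add: field_simps)

lemma cssq_mult_cfsq:
  assumes "rho x > 0" "csq rho p gamma x \<ge> 0"
  shows "cssq rho p H gamma x \<xi> * cfsq rho p H gamma x \<xi> =
    gamma * p x * (norm \<xi>)\<^sup>2 * (H x \<bullet> \<xi>)\<^sup>2 / (rho x)\<^sup>2"
proof -
  let ?A = "(csq rho p gamma x + hsq rho H x) * (norm \<xi>)\<^sup>2"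
  let ?D = "magnetosonic_disc rho p H gamma x \<xi>"
  have "cssq rho p H gamma x \<xi> * cfsq rho p H gamma x \<xi> = (?A\<^sup>2 - (sqrt ?D)\<^sup>2) / 4"
    unfolding cssq_eq cfsq_eq by (simp add: field_simps power2_eq_square)
  also have "\<dots> = (?A\<^sup>2 - ?D) / 4"
    using magnetosonic_disc_nonneg[OF assms] by simp
  also have "\<dots> = gamma * p x * (norm \<xi>)\<^sup>2 * (H x \<bullet> \<xi>)\<^sup>2 / (rho x)\<^sup>2"
    using assms(1)
    unfolding magnetosonic_disc_def bsq_eq csq_def hsq_def
    by (simp add: field_simps power2_eq_square power4_eq_xxxx)
  finally show ?thesis .
qed

lemma q2_mult_q3:
  assumes "rho x > 0" "csq rho p gamma x \<ge> 0"
  shows "q2 rho p H gamma (t, x, \<tau>, \<xi>) * q3 rho p H gamma (t, x, \<tau>, \<xi>) =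
    magnetosonic_quartic rho p H gamma (t, x, \<tau>, \<xi>)"
proof -
  let ?s = "cssq rho p H gamma x \<xi>" and ?f = "cfsq rho p H gamma x \<xi>"
  have "q2 rho p H gamma (t, x, \<tau>, \<xi>) * q3 rho p H gamma (t, x, \<tau>, \<xi>) =
      (rho x)\<^sup>2 * (\<tau>^4 - (?s + ?f) * \<tau>\<^sup>2 + ?s * ?f)"
    unfolding q2_def q3_def by (simp add: algebra_simps power2_eq_square power4_eq_xxxx)
  also have "\<dots> = magnetosonic_quartic rho p H gamma (t, x, \<tau>, \<xi>)"
    using assms(1)
    unfolding cssq_add_cfsq cssq_mult_cfsq[OF assms] magnetosonic_quartic_def csq_def hsq_def
    by (simp add: field_simps power2_eq_square)
  finally show ?thesis .
qed

lemma det_p2_factor: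
  assumes "rho x > 0" "csq rho p gamma x \<ge> 0"
  shows "det (p2 rho p H gamma (t, x, \<tau>, \<xi>)) =
    q1 rho H (t, x, \<tau>, \<xi>) * q2 rho p H gamma (t, x, \<tau>, \<xi>) * q3 rho p H gamma (t, x, \<tau>, \<xi>)"
  using det_p2 q2_mult_q3[OF assms] by (simp add: mult.assoc)

lemma gamma_p_pos: "rho x > 0 \<Longrightarrow> csq rho p gamma x > 0 \<Longrightarrow> gamma * p x > 0"
  unfolding csq_def by (simp add: zero_less_divide_iff)

lemma magnetosonic_disc_pos:
  assumes "rho x > 0" "csq rho p gamma x > 0" "cross3 \<xi> (H x) \<noteq> 0"
  shows "magnetosonic_disc rho p H gamma x \<xi> > 0"
proof -
  have "bsq rho H x \<xi> > 0" "\<xi> \<noteq> 0"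
    using assms unfolding bsq_def by auto
  then have "4 * bsq rho H x \<xi> * csq rho p gamma x * (norm \<xi>)\<^sup>2 > 0"
    using assms(2) by simp
  then show ?thesis
    unfolding magnetosonic_disc_def by (simp add: add_nonneg_pos)
qed

lemma cfsq_pos:
  assumes "rho x > 0" "csq rho p gamma x > 0" "\<xi> \<noteq> 0"
  shows "cfsq rho p H gamma x \<xi> > 0"
proof -
  have "(csq rho p gamma x + hsq rho H x) * (norm \<xi>)\<^sup>2 > 0"
    using assms unfolding hsq_def by (simp add: add_pos_nonneg)
  moreover have "magnetosonic_disc rho p H gamma x \<xi> \<ge> 0"
    using magnetosonic_disc_nonneg assms(1,2) by (simp add: less_imp_le)
  ultimately show ?thesis
    unfolding cfsq_eq by (simp add: add_pos_nonneg)
qed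

lemma cssq_pos:
  assumes "rho x > 0" "csq rho p gamma x > 0" "H x \<bullet> \<xi> \<noteq> 0"
  shows "cssq rho p H gamma x \<xi> > 0"
proof -
  have "\<xi> \<noteq> 0" using assms(3) by auto
  then have "cssq rho p H gamma x \<xi> * cfsq rho p H gamma x \<xi> > 0"
    using assms gamma_p_pos[OF assms(1,2)] unfolding cssq_mult_cfsq[OF assms(1) less_imp_le[OF assms(2)]]
    by simp
  then show ?thesis
    using cfsq_pos[where H = H, OF assms(1,2) \<open>\<xi> \<noteq> 0\<close>] by (simp add: zero_less_mult_iff)
qed

lemma q1_zero_imp_tau_nonzero: "q1 rho H (t, x, \<tau>, \<xi>) = 0 \<Longrightarrow> H x \<bullet> \<xi> \<noteq> 0 \<Longrightarrow> \<tau> \<noteq> 0"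
  unfolding q1_def by auto

lemma q2_zero_imp_tau_nonzero:
  assumes "q2 rho p H gamma (t, x, \<tau>, \<xi>) = 0"
    and "rho x > 0" "csq rho p gamma x > 0" "H x \<bullet> \<xi> \<noteq> 0"
  shows "\<tau> \<noteq> 0"
  using assms cssq_pos[where H = H and p = p, OF assms(2-4)] unfolding q2_def by auto

lemma q3_zero_imp_tau_nonzero:
  assumes "q3 rho p H gamma (t, x, \<tau>, \<xi>) = 0"
    and "rho x > 0" "csq rho p gamma x > 0" "\<xi> \<noteq> 0"
  shows "\<tau> \<noteq> 0"
  using assms cfsq_pos[where H = H, OF assms(2-4)] unfolding q3_def by auto

lemma homogeneous_on_p2: "homogeneous_on S 2 (p2 rho p H gamma)"
  unfolding homogeneous_on_def
  by (auto simp: dil_def vec_eq_iff p2_nth algebra_simps power2_eq_square split: prod.splits)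

lemma homogeneous_on_q1: "homogeneous_on S 2 (q1 rho H)"
  unfolding homogeneous_on_def
  by (auto simp: dil_def q1_def algebra_simps power2_eq_square split: prod.splits)

lemma magnetosonic_disc_scaleR:
  "magnetosonic_disc rho p H gamma x (s *\<^sub>R \<xi>) = (s\<^sup>2)\<^sup>2 * magnetosonic_disc rho p H gamma x \<xi>"
  unfolding magnetosonic_disc_def bsq_def
  by (simp add: cross_mult_left power_mult_distrib algebra_simps flip: power_mult)

lemma sqrt_scale_square: "sqrt ((s\<^sup>2)\<^sup>2 * d) = s\<^sup>2 * sqrt d"
  by (simp only: real_sqrt_mult real_sqrt_abs abs_of_nonneg[OF zero_le_power2])

lemma cssq_scaleR: "cssq rho p H gamma x (s *\<^sub>R \<xi>) = s\<^sup>2 * cssq rho p H gamma x \<xi>"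
  unfolding cssq_eq magnetosonic_disc_scaleR sqrt_scale_square
  by (simp add: power_mult_distrib algebra_simps)

lemma cfsq_scaleR: "cfsq rho p H gamma x (s *\<^sub>R \<xi>) = s\<^sup>2 * cfsq rho p H gamma x \<xi>"
  unfolding cfsq_eq magnetosonic_disc_scaleR sqrt_scale_square
  by (simp add: power_mult_distrib algebra_simps)

lemma homogeneous_on_q2: "homogeneous_on S 2 (q2 rho p H gamma)"
  unfolding homogeneous_on_def
  by (auto simp: dil_def q2_def cssq_scaleR algebra_simps power2_eq_square split: prod.splits)

lemma homogeneous_on_q3: "homogeneous_on S 2 (q3 rho p H gamma)"
  unfolding homogeneous_on_def
  by (auto simp: dil_def q3_def cfsq_scaleR algebra_simps power2_eq_square split: prod.splits)

section \<open>Real principal type and reduction\<close>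

lemma frechet_derivative_along_line:
  fixes f :: "'a::real_normed_vector \<Rightarrow> real"
  assumes "f differentiable at z" and "((\<lambda>s. f (z + s *\<^sub>R e)) has_real_derivative d) (at 0)"
  shows "frechet_derivative f (at z) e = d"
proof -
  have line: "((\<lambda>s::real. z + s *\<^sub>R e) has_derivative (\<lambda>h. h *\<^sub>R e)) (at 0)"
    by (auto intro!: derivative_eq_intros)
  have "((\<lambda>s. f (z + s *\<^sub>R e)) has_derivative (\<lambda>h. frechet_derivative f (at z) (h *\<^sub>R e))) (at 0)"
    using diff_chain_at[OF line, of f "frechet_derivative f (at z)"]
      assms(1)[unfolded frechet_derivative_works]
    by (simp add: o_def)
  moreover have "((\<lambda>s. f (z + s *\<^sub>R e)) has_derivative (\<lambda>h. d * h)) (at 0)"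
    using assms(2) unfolding has_field_derivative_def by simp
  ultimately have "(\<lambda>h. frechet_derivative f (at z) (h *\<^sub>R e)) = (\<lambda>h. d * h)"
    by (rule has_derivative_unique)
  from fun_cong[OF this, of 1] show ?thesis by simp
qed

lemma frechet_derivative_tau:
  fixes q :: "phase \<Rightarrow> real"
  assumes "q differentiable at (t, x, \<tau>, \<xi>)" and "\<And>\<sigma>. q (t, x, \<sigma>, \<xi>) = a * \<sigma>\<^sup>2 + b"
  shows "frechet_derivative q (at (t, x, \<tau>, \<xi>)) (0, 0, 1, 0) = 2 * a * \<tau>"
proof (rule frechet_derivative_along_line[OF assms(1)])
  have "((\<lambda>s. a * (\<tau> + s)\<^sup>2 + b) has_real_derivative 2 * a * \<tau>) (at 0)"
    by (auto intro!: derivative_eq_intros)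
  then show "((\<lambda>s. q ((t, x, \<tau>, \<xi>) + s *\<^sub>R (0, 0, 1, 0))) has_real_derivative 2 * a * \<tau>) (at 0)"
    using assms(2) by simp
qed

lemma real_principal_type_if_tau_derivative_nonzero:
  assumes "smooth_on U q"
    and "\<And>z. z \<in> U \<Longrightarrow> q z = 0 \<Longrightarrow> frechet_derivative q (at z) (0, 0, 1, 0) \<noteq> 0"
  shows "real_principal_type U q"
  unfolding real_principal_type_def
proof (intro conjI ballI impI allI)
  fix z c assume "z \<in> U" "q z = 0"
  then have "fst (ham q z) \<noteq> 0" using assms(2) unfolding ham_def Let_def by simp
  moreover have "fst (c *\<^sub>R radial z) = 0" unfolding radial_def by (simp split: prod.splits)
  ultimately show "ham q z \<noteq> 0" "ham q z \<noteq> c *\<^sub>R radial z" by auto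
qed (rule assms(1))

lemma reduces_at_if_det_factor:
  fixes P :: "phase \<Rightarrow> real^3^3" and q a b :: "phase \<Rightarrow> real"
  assumes U: "open U" "conic U" "z \<in> U"
    and det: "\<And>w. w \<in> U \<Longrightarrow> det (P w) = q w * a w * b w"
    and nonzero: "\<And>w. w \<in> U \<Longrightarrow> a w * b w \<noteq> 0"
    and elementary: "\<And>i j. (\<lambda>w. P w $ i $ j) \<in> elementary_on U" "a \<in> elementary_on U" "b \<in> elementary_on U"
    and homogeneous: "homogeneous_on U 2 P" "homogeneous_on U 2 a" "homogeneous_on U 2 b"
    and "real_principal_type U q"
  shows "reduces_at P U q z"
proof -
  define pt where "pt w = inverse (a w * b w) *\<^sub>R adjugate3 (P w)" for w
  have "(\<lambda>w. pt w $ i $ j) \<in> elementary_on U" for i j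
    unfolding pt_def using nonzero
    by (simp, intro elementary_on.mult elementary_on.inverse elementary_on_adjugate3 elementary) auto
  then have "smooth_on U pt"
    by (intro smooth_on_matrix_entries elementary_on_imp_smooth_on U(1))
  moreover have "homogeneous_on U 0 pt"
    using homogeneous unfolding homogeneous_on_def pt_def
    by (simp add: adjugate3_scaleR field_simps power2_eq_square)
  moreover have "pt w ** P w = q w *\<^sub>R mat 1" if "w \<in> U" for w
  proof -
    have "pt w ** P w = inverse (a w * b w) *\<^sub>R (adjugate3 (P w) ** P w)"
      unfolding pt_def by (simp add: scalar_matrix_assoc)
    also have "\<dots> = q w *\<^sub>R mat 1"
      using det[OF that] nonzero[OF that] by (simp add: adjugate3_mult field_simps)
    finally show ?thesis .
  qed
  ultimately show ?thesis
    unfolding reduces_at_def using U \<open>real_principal_type U q\<close> by blast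
qed

section \<open>The magnetohydrodynamic symbols\<close>

lemma Omega_eq: "Omega H =
    {z. phase_xi z \<bullet> H (phase_x z) \<noteq> 0} \<inter> {z. cross3 (phase_xi z) (H (phase_x z)) \<noteq> 0}"
  unfolding Omega_def by (auto split: prod.splits)

lemma open_Omega:
  assumes "smooth_on UNIV H" shows "open (Omega H)"
proof -
  have "continuous_on UNIV phase_x" "continuous_on UNIV phase_xi"
    unfolding phase_x_def phase_xi_def by (intro continuous_intros)+
  moreover have "continuous_on UNIV H"
    using differentiable_imp_continuous_on[OF smooth_on_imp_differentiable_on[OF assms]] .
  ultimately have "continuous_on UNIV (\<lambda>z. H (phase_x z))" "continuous_on UNIV phase_xi"
    by (auto intro: continuous_on_compose2[of UNIV H])
  then have "open {z. phase_xi z \<bullet> H (phase_x z) \<noteq> 0}"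
    "open {z. cross3 (phase_xi z) (H (phase_x z)) \<noteq> 0}"
    by (auto intro!: open_Collect_neq continuous_intros continuous_on_cross)
  then show ?thesis unfolding Omega_eq by blast
qed

lemma conic_Omega: "conic (Omega H)"
  unfolding conic_def Omega_def dil_def by (auto split: prod.splits simp: cross_mult_left)

lemma conic_Int: "conic A \<Longrightarrow> conic B \<Longrightarrow> conic (A \<inter> B)"
  unfolding conic_def by auto

lemma q1_phase: "q1 rho H = (\<lambda>z. rho (phase_x z) * (phase_tau z)\<^sup>2 - (H (phase_x z) \<bullet> phase_xi z)\<^sup>2)"
  by (rule ext) (simp add: q1_def split: prod.splits)

lemma q2_phase:
  "q2 rho p H gamma = (\<lambda>z. rho (phase_x z) * ((phase_tau z)\<^sup>2 - cssq rho p H gamma (phase_x z) (phase_xi z)))"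
  by (rule ext) (simp add: q2_def split: prod.splits)

lemma q3_phase:
  "q3 rho p H gamma = (\<lambda>z. rho (phase_x z) * ((phase_tau z)\<^sup>2 - cfsq rho p H gamma (phase_x z) (phase_xi z)))"
  by (rule ext) (simp add: q3_def split: prod.splits)

lemma p2_nth_phase: "(\<lambda>z. p2 rho p H gamma z $ i $ j) = (\<lambda>z.
    (rho (phase_x z) * (phase_tau z)\<^sup>2 - (H (phase_x z) \<bullet> phase_xi z)\<^sup>2) * (if i = j then 1 else 0)
    - (gamma * p (phase_x z) + (norm (H (phase_x z)))\<^sup>2) * (phase_xi z $ i * phase_xi z $ j)
    + (H (phase_x z) \<bullet> phase_xi z) * (phase_xi z $ i * H (phase_x z) $ j + H (phase_x z) $ i * phase_xi z $ j))"
  by (rule ext) (auto simp: p2_nth)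

locale mhd_background =
  fixes rho p :: "real^3 \<Rightarrow> real" and H :: "real^3 \<Rightarrow> real^3" and gamma :: real
  assumes smooth_rho: "smooth_on UNIV rho" and smooth_p: "smooth_on UNIV p"
    and smooth_H: "smooth_on UNIV H"
    and rho_pos: "rho x > 0" and csq_pos: "csq rho p gamma x > 0"
begin

lemma elementary_on_coefficients:
  "(\<lambda>z. rho (phase_x z)) \<in> elementary_on S"
  "(\<lambda>z. inverse (rho (phase_x z))) \<in> elementary_on S"
  "(\<lambda>z. p (phase_x z)) \<in> elementary_on S"
  "(\<lambda>z. H (phase_x z) $ i) \<in> elementary_on S"
  using elementary_on.base[OF smooth_rho] elementary_on.base[OF smooth_p]
    elementary_on_base_nth[OF smooth_H] rho_pos
  by (auto intro: elementary_on.inverse simp: less_imp_neq[symmetric])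

lemma elementary_on_inner_terms:
  "(\<lambda>z. H (phase_x z) \<bullet> phase_xi z) \<in> elementary_on S"
  "(\<lambda>z. (norm (phase_xi z))\<^sup>2) \<in> elementary_on S"
  "(\<lambda>z. (norm (H (phase_x z)))\<^sup>2) \<in> elementary_on S"
  unfolding power2_norm_eq_inner
  by (intro elementary_on_inner elementary_on.xi elementary_on_coefficients)+

lemmas elementary_on_intros = elementary_on.const elementary_on.tau elementary_on.xi
  elementary_on.add elementary_on.mult elementary_on_diff elementary_on_power
  elementary_on_coefficients elementary_on_inner_terms

lemma elementary_on_speeds:
  "(\<lambda>z. csq rho p gamma (phase_x z)) \<in> elementary_on S"
  "(\<lambda>z. hsq rho H (phase_x z)) \<in> elementary_on S"
  "(\<lambda>z. bsq rho H (phase_x z) (phase_xi z)) \<in> elementary_on S"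
proof -
  have "(\<lambda>z. gamma * p (phase_x z) * inverse (rho (phase_x z))) \<in> elementary_on S"
    "(\<lambda>z. (norm (H (phase_x z)))\<^sup>2 * inverse (rho (phase_x z))) \<in> elementary_on S"
    "(\<lambda>z. ((norm (phase_xi z))\<^sup>2 * (norm (H (phase_x z)))\<^sup>2 - (H (phase_x z) \<bullet> phase_xi z)\<^sup>2)
        * inverse (rho (phase_x z))) \<in> elementary_on S"
    by (intro elementary_on_intros)+
  then show "(\<lambda>z. csq rho p gamma (phase_x z)) \<in> elementary_on S"
    "(\<lambda>z. hsq rho H (phase_x z)) \<in> elementary_on S"
    "(\<lambda>z. bsq rho H (phase_x z) (phase_xi z)) \<in> elementary_on S"
    by (simp_all add: csq_def hsq_def bsq_eq field_simps)
qed

lemma elementary_on_slow_fast_speeds: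
  assumes "U \<subseteq> Omega H"
  shows "(\<lambda>z. cssq rho p H gamma (phase_x z) (phase_xi z)) \<in> elementary_on U"
    "(\<lambda>z. cfsq rho p H gamma (phase_x z) (phase_xi z)) \<in> elementary_on U"
proof -
  let ?A = "\<lambda>z. (csq rho p gamma (phase_x z) + hsq rho H (phase_x z)) * (norm (phase_xi z))\<^sup>2"
  let ?D = "\<lambda>z. magnetosonic_disc rho p H gamma (phase_x z) (phase_xi z)"
  have "(\<lambda>z. (csq rho p gamma (phase_x z) - hsq rho H (phase_x z))\<^sup>2 * ((norm (phase_xi z))\<^sup>2)\<^sup>2
      + 4 * bsq rho H (phase_x z) (phase_xi z) * csq rho p gamma (phase_x z) * (norm (phase_xi z))\<^sup>2)
      \<in> elementary_on U"
    by (intro elementary_on_intros elementary_on_speeds)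
  then have "?D \<in> elementary_on U"
    by (simp add: magnetosonic_disc_def flip: power_mult)
  moreover have "\<forall>z\<in>U. ?D z > 0"
    using assms magnetosonic_disc_pos[OF rho_pos csq_pos]
    by (auto simp: Omega_def split: prod.splits)
  ultimately have sqrt_D: "(\<lambda>z. sqrt (?D z)) \<in> elementary_on U"
    by (rule elementary_on.sqrt)
  have A: "?A \<in> elementary_on U"
    by (intro elementary_on.mult elementary_on.add elementary_on_speeds elementary_on_inner_terms)
  have "(\<lambda>z. (?A z - sqrt (?D z)) * (1/2)) \<in> elementary_on U"
    "(\<lambda>z. (?A z + sqrt (?D z)) * (1/2)) \<in> elementary_on U"
    by (intro elementary_on.mult elementary_on.add elementary_on_diff elementary_on.const A sqrt_D)+
  then show "(\<lambda>z. cssq rho p H gamma (phase_x z) (phase_xi z)) \<in> elementary_on U"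
    "(\<lambda>z. cfsq rho p H gamma (phase_x z) (phase_xi z)) \<in> elementary_on U"
    by (simp_all add: cssq_eq cfsq_eq)
qed

lemma elementary_on_q1: "q1 rho H \<in> elementary_on S"
  unfolding q1_phase by (intro elementary_on_intros)

lemma elementary_on_q2: "U \<subseteq> Omega H \<Longrightarrow> q2 rho p H gamma \<in> elementary_on U"
  unfolding q2_phase by (intro elementary_on_intros elementary_on_slow_fast_speeds)

lemma elementary_on_q3: "U \<subseteq> Omega H \<Longrightarrow> q3 rho p H gamma \<in> elementary_on U"
  unfolding q3_phase by (intro elementary_on_intros elementary_on_slow_fast_speeds)

lemma elementary_on_p2: "(\<lambda>z. p2 rho p H gamma z $ i $ j) \<in> elementary_on S"
  unfolding p2_nth_phase by (intro elementary_on_intros)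

abbreviation char_factors :: "(phase \<Rightarrow> real) set" where
  "char_factors \<equiv> {q1 rho H, q2 rho p H gamma, q3 rho p H gamma}"

lemma det_p2_eq_char_factors:
  "det (p2 rho p H gamma z) = q1 rho H z * q2 rho p H gamma z * q3 rho p H gamma z"
proof -
  obtain t x \<tau> \<xi> where "z = (t, x, \<tau>, \<xi>)" by (cases z)
  then show ?thesis using det_p2_factor[OF rho_pos less_imp_le[OF csq_pos]] by simp
qed

lemma char_factor_tau_quadratic:
  assumes "q \<in> char_factors" shows "\<exists>b. \<forall>\<sigma>. q (t, x, \<sigma>, \<xi>) = rho x * \<sigma>\<^sup>2 + b"
proof -
  have "q1 rho H (t, x, \<sigma>, \<xi>) = rho x * \<sigma>\<^sup>2 + - (H x \<bullet> \<xi>)\<^sup>2"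
    "q2 rho p H gamma (t, x, \<sigma>, \<xi>) = rho x * \<sigma>\<^sup>2 + - (rho x * cssq rho p H gamma x \<xi>)"
    "q3 rho p H gamma (t, x, \<sigma>, \<xi>) = rho x * \<sigma>\<^sup>2 + - (rho x * cfsq rho p H gamma x \<xi>)" for \<sigma>
    by (simp_all add: q1_def q2_def q3_def right_diff_distrib)
  then show ?thesis using assms by blast
qed

lemma char_factor_zero_imp_tau_nonzero:
  assumes "q \<in> char_factors" "(t, x, \<tau>, \<xi>) \<in> Omega H" "q (t, x, \<tau>, \<xi>) = 0"
  shows "\<tau> \<noteq> 0"
proof -
  have "H x \<bullet> \<xi> \<noteq> 0" "\<xi> \<noteq> 0"
    using assms(2) by (auto simp: Omega_def inner_commute)
  then show ?thesis
    using assms(1,3) q1_zero_imp_tau_nonzero q2_zero_imp_tau_nonzero[OF _ rho_pos csq_pos]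
      q3_zero_imp_tau_nonzero[OF _ rho_pos csq_pos]
    by blast
qed

lemma real_principal_type_char_factor:
  assumes "q \<in> char_factors" "open U" "U \<subseteq> Omega H"
  shows "real_principal_type U q"
proof (rule real_principal_type_if_tau_derivative_nonzero)
  have "q \<in> elementary_on U"
    using assms elementary_on_q1 elementary_on_q2 elementary_on_q3 by blast
  then show "smooth_on U q"
    by (rule elementary_on_imp_smooth_on[OF assms(2)])
  fix z assume "z \<in> U" "q z = 0"
  obtain t x \<tau> \<xi> where z: "z = (t, x, \<tau>, \<xi>)" by (cases z)
  obtain b where "\<forall>\<sigma>. q (t, x, \<sigma>, \<xi>) = rho x * \<sigma>\<^sup>2 + b"
    using char_factor_tau_quadratic[OF assms(1)] by blast
  then have "frechet_derivative q (at z) (0, 0, 1, 0) = 2 * rho x * \<tau>"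
    unfolding z using smooth_on_imp_differentiable_at[OF \<open>smooth_on U q\<close> \<open>z \<in> U\<close>] z
    by (intro frechet_derivative_tau) auto
  moreover have "\<tau> \<noteq> 0"
    using char_factor_zero_imp_tau_nonzero assms(1,3) \<open>z \<in> U\<close> \<open>q z = 0\<close> z by blast
  ultimately show "frechet_derivative q (at z) (0, 0, 1, 0) \<noteq> 0"
    using rho_pos[of x] by simp
qed

lemma reduces_at_char_factor:
  assumes U: "open U" "conic U" "U \<subseteq> Omega H" "z \<in> U"
    and factors: "{q, a, b} \<subseteq> char_factors"
    and det: "\<And>w. w \<in> U \<Longrightarrow> det (p2 rho p H gamma w) = q w * a w * b w"
    and nonzero: "\<And>w. w \<in> U \<Longrightarrow> a w * b w \<noteq> 0"
  shows "reduces_at (p2 rho p H gamma) U q z"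
proof (rule reduces_at_if_det_factor[OF U(1,2,4) det nonzero elementary_on_p2])
  show "a \<in> elementary_on U" "b \<in> elementary_on U"
    using factors elementary_on_q1 elementary_on_q2[OF U(3)] elementary_on_q3[OF U(3)] by auto
  show "homogeneous_on U 2 (p2 rho p H gamma)" "homogeneous_on U 2 a" "homogeneous_on U 2 b"
    using factors homogeneous_on_p2 homogeneous_on_q1 homogeneous_on_q2 homogeneous_on_q3 by auto
  show "real_principal_type U q"
    using factors U by (intro real_principal_type_char_factor) auto
qed

end

theorem proposition5p2:
  fixes rho p :: "real^3 \<Rightarrow> real" and H :: "real^3 \<Rightarrow> real^3" and gamma :: real
    and \<Gamma>1 \<Gamma>2 \<Gamma>3 :: "phase set"
  assumes "smooth_on UNIV rho" and "smooth_on UNIV p" and "smooth_on UNIV H"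
    and "\<forall>x. rho x > 0"
    and "\<forall>x. csq rho p gamma x > 0"
    and "\<forall>x. 0 < (norm (H x))^2 \<and> (norm (H x))^2 \<noteq> rho x * csq rho p gamma x"
    and "open \<Gamma>1" "open \<Gamma>2" "open \<Gamma>3"
    and "conic \<Gamma>1" "conic \<Gamma>2" "conic \<Gamma>3"
    and "{z \<in> Omega H. q1 rho H z = 0} \<subseteq> \<Gamma>1"
    and "{z \<in> Omega H. q2 rho p H gamma z = 0} \<subseteq> \<Gamma>2"
    and "{z \<in> Omega H. q3 rho p H gamma z = 0} \<subseteq> \<Gamma>3"
    and "\<Gamma>1 \<inter> \<Gamma>2 = {}" "\<Gamma>1 \<inter> \<Gamma>3 = {}" "\<Gamma>2 \<inter> \<Gamma>3 = {}"
  shows "{z \<in> Omega H. det (p2 rho p H gamma z) = 0} =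
           {z \<in> Omega H. (z \<in> \<Gamma>1 \<and> q1 rho H z = 0) \<or> (z \<in> \<Gamma>2 \<and> q2 rho p H gamma z = 0)
                          \<or> (z \<in> \<Gamma>3 \<and> q3 rho p H gamma z = 0)}
       \<and> (\<forall>z \<in> Omega H. det (p2 rho p H gamma z) = 0 \<longrightarrow>
            (z \<in> \<Gamma>1 \<and> q1 rho H z = 0 \<and> reduces_at (p2 rho p H gamma) (Omega H \<inter> \<Gamma>1) (q1 rho H) z)
          \<or> (z \<in> \<Gamma>2 \<and> q2 rho p H gamma z = 0 \<and> reduces_at (p2 rho p H gamma) (Omega H \<inter> \<Gamma>2) (q2 rho p H gamma) z)
          \<or> (z \<in> \<Gamma>3 \<and> q3 rho p H gamma z = 0 \<and> reduces_at (p2 rho p H gamma) (Omega H \<inter> \<Gamma>3) (q3 rho p H gamma) z))"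
proof -
  interpret mhd_background rho p H gamma
    using assms(1-5) by unfold_locales auto
  note det = det_p2_eq_char_factors
  have region: "open (Omega H \<inter> \<Gamma>)" "conic (Omega H \<inter> \<Gamma>)" if "open \<Gamma>" "conic \<Gamma>" for \<Gamma>
    using that open_Omega[OF assms(3)] conic_Int[OF conic_Omega] by auto
  have avoid: "q w \<noteq> 0" if "{z \<in> Omega H. q z = 0} \<subseteq> \<Gamma>'" "\<Gamma> \<inter> \<Gamma>' = {}" "w \<in> Omega H" "w \<in> \<Gamma>"
    for q :: "phase \<Rightarrow> real" and \<Gamma> \<Gamma>' w
    using that by blast
  have disjoint: "\<Gamma>2 \<inter> \<Gamma>1 = {}" "\<Gamma>3 \<inter> \<Gamma>1 = {}" "\<Gamma>3 \<inter> \<Gamma>2 = {}"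
    using assms(16-18) by blast+
  have "reduces_at (p2 rho p H gamma) (Omega H \<inter> \<Gamma>1) (q1 rho H) z" if "z \<in> Omega H \<inter> \<Gamma>1" for z
    using that region[OF assms(7,10)] avoid[OF assms(14,16)] avoid[OF assms(15,17)]
    by (intro reduces_at_char_factor[where a = "q2 rho p H gamma" and b = "q3 rho p H gamma"])
      (simp_all add: det)
  moreover have "reduces_at (p2 rho p H gamma) (Omega H \<inter> \<Gamma>2) (q2 rho p H gamma) z"
    if "z \<in> Omega H \<inter> \<Gamma>2" for z
    using that region[OF assms(8,11)] avoid[OF assms(13) disjoint(1)] avoid[OF assms(15,18)]
    by (intro reduces_at_char_factor[where a = "q1 rho H" and b = "q3 rho p H gamma"])
      (simp_all add: det mult_ac)
  moreover have "reduces_at (p2 rho p H gamma) (Omega H \<inter> \<Gamma>3) (q3 rho p H gamma) z"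
    if "z \<in> Omega H \<inter> \<Gamma>3" for z
    using that region[OF assms(9,12)] avoid[OF assms(13) disjoint(2)] avoid[OF assms(14) disjoint(3)]
    by (intro reduces_at_char_factor[where a = "q1 rho H" and b = "q2 rho p H gamma"])
      (simp_all add: det mult_ac)
  moreover have "det (p2 rho p H gamma z) = 0 \<longleftrightarrow> (z \<in> \<Gamma>1 \<and> q1 rho H z = 0)
      \<or> (z \<in> \<Gamma>2 \<and> q2 rho p H gamma z = 0) \<or> (z \<in> \<Gamma>3 \<and> q3 rho p H gamma z = 0)"
    if "z \<in> Omega H" for z
    using that assms(13-15) unfolding det mult_eq_0_iff by blast
  ultimately show ?thesis by blast
qed

end
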